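(* Let $\mathcal F$ be a filtration array, $E=(E_{m,n})_{m,n\in\mathbb N}$ a nonnegative process adapted to $\mathcal F$, and $G=(G_n)_{n\in\mathbb N}$ a process adapted to $\mathcal F_{\infty,\bullet}$. Assume that $E$ converges to $G$ in $L_1$ uniformly in $\mathcal P$. Then the following are equivalent: (i) there exists an extended integer sequence $r=(r_m)_{m\in\mathbb N}$ with $r_m\to\infty$ as $m\to\infty$ such that $E$ is an $r$-asymptotic e-process for $\mathcal P$ and $\mathcal F$; (ii) $G$ is an e-process for $\mathcal P$ with respect to $\mathcal F_{\infty,\bullet}$. Moreover, if these hold, then $E$ is an $r$-asymptotic e-process for every extended integer sequence $r$ satisfying $$\lim_{m\to\infty}\sum_{n=0}^{r_m}\sup_{P\in\mathcal P}\mathbb E_P[|E_{m,n}-G_n|]=0,$$ and there exists at least one such sequence with $r_m\to\infty$.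
   Context: $(\Omega,\mathcal A)$ is a measurable space and $\mathcal P$ a set of probability measures on it. $\mathbb N=\{0,1,\dots\}$; extended integers are elements of $\mathbb N\cup\{\infty\}$. Nonnegative random variables take values in $[0,\infty]$ with $\mathbb E_P[X]:=\infty$ if not $P$-integrable; $X_\infty:=\limsup_n X_n$ for a process. A filtration sequence is a family $(\mathcal F_{m,n})_{m,n\in\mathbb N}$ of sub-$\sigma$-algebras with each $\mathcal F_{m,\bullet}$ a filtration; it is a filtration array if moreover $\mathcal F_{m,n}\subset\mathcal F_{m+1,n}$ for all $m,n$. Then $\mathcal F_{\infty,n}:=\sigma(\bigcup_{m}\mathcal F_{m,n})$ and $\mathcal F_{\infty,\bullet}$ is a filtration. Adapted means $E_{m,n}$ is $\mathcal F_{m,n}$-measurable. For a filtration $\mathcal G$ and $\rho\in\mathbb N\cup\{\infty\}$, $\mathcal T(\rho,\mathcal G,\mathcal P)$ is the set of $\mathcal G$-stopping times $\tau$ (values in $\mathbb N\cup\{\infty\}$) with $P[\tau\le\rho]=1$ for all $P\in\mathcal P$; $\mathcal T(r,\mathcal F,\mathcal P)$ is the set of sequences $(\tau_m)$ with $\tau_m\in\mathcal T(r_m,\mathcal F_{m,\bullet},\mathcal P)$. $E$ is an $r$-asymptotic e-process if for every $\tau\in\mathcal T(r,\mathcal F,\mathcal P)$, $\limsup_{m}\sup_{P\in\mathcal P}\mathbb E_P[E_{m,\tau_m}]\le 1$. An e-process for $\mathcal P$ w.r.t. a filtration $\mathcal G$ is a nonnegative $\mathcal G$-adapted process $(G_n)$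 with $\mathbb E_P[G_\tau]\le 1$ for every $\mathcal G$-stopping time $\tau$ and every $P\in\mathcal P$. $E$ converges to $G$ in $L_1$ uniformly in $\mathcal P$ if all $E_{m,n}$ and $G_n$ are $P$-integrable for all $P\in\mathcal P$ and $\lim_{m\to\infty}\sup_{P\in\mathcal P}\mathbb E_P[|E_{m,n}-G_n|]=0$ for every $n$. *)

theory Defs
  imports "HOL-Probability.Probability"
begin

definition sub_sigma :: "'a measure \<Rightarrow> 'a measure \<Rightarrow> bool" where
  "sub_sigma M N \<longleftrightarrow> space N = space M \<and> sets N \<subseteq> sets M"

definition filtration :: "'a measure \<Rightarrow> (nat \<Rightarrow> 'a measure) \<Rightarrow> bool" where
  "filtration M G \<longleftrightarrow> (\<forall>n. sub_sigma M (G n)) \<and> (\<forall>n. sets (G n) \<subseteq> sets (G (Suc n)))"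

definition filtration_sequence :: "'a measure \<Rightarrow> (nat \<Rightarrow> nat \<Rightarrow> 'a measure) \<Rightarrow> bool" where
  "filtration_sequence M F \<longleftrightarrow> (\<forall>m. filtration M (F m))"

definition filtration_array :: "'a measure \<Rightarrow> (nat \<Rightarrow> nat \<Rightarrow> 'a measure) \<Rightarrow> bool" where
  "filtration_array M F \<longleftrightarrow> filtration_sequence M F \<and>
     (\<forall>m n. sets (F m n) \<subseteq> sets (F (Suc m) n))"

definition F_inf :: "'a measure \<Rightarrow> (nat \<Rightarrow> nat \<Rightarrow> 'a measure) \<Rightarrow> nat \<Rightarrow> 'a measure" where
  "F_inf M F n = sigma (space M) (\<Union>m. sets (F m n))"

definition stopping_time :: "(nat \<Rightarrow> 'a measure) \<Rightarrow> ('a \<Rightarrow> enat) \<Rightarrow> bool" where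
  "stopping_time G \<tau> \<longleftrightarrow> (\<forall>n. {\<omega> \<in> space (G n). \<tau> \<omega> \<le> enat n} \<in> sets (G n))"

definition bounded_stopping_times ::
    "enat \<Rightarrow> (nat \<Rightarrow> 'a measure) \<Rightarrow> 'a measure set \<Rightarrow> ('a \<Rightarrow> enat) set" where
  "bounded_stopping_times \<rho> G Ps =
     {\<tau>. stopping_time G \<tau> \<and> (\<forall>P\<in>Ps. emeasure P {\<omega> \<in> space P. \<tau> \<omega> \<le> \<rho>} = 1)}"

definition stopped :: "(nat \<Rightarrow> 'a \<Rightarrow> ennreal) \<Rightarrow> ('a \<Rightarrow> enat) \<Rightarrow> 'a \<Rightarrow> ennreal" where
  "stopped X \<tau> \<omega> = (case \<tau> \<omega> of enat n \<Rightarrow> X n \<omega> | \<infinity> \<Rightarrow> limsup (\<lambda>n. X n \<omega>))"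

text \<open>r-asymptotic e-process (expectations of [0,\<infinity>]-valued variables are nonnegative integrals,
  which equal \<infinity> for non-integrable variables).\<close>
definition asymptotic_eprocess ::
    "'a measure set \<Rightarrow> (nat \<Rightarrow> nat \<Rightarrow> 'a measure) \<Rightarrow> (nat \<Rightarrow> enat) \<Rightarrow> (nat \<Rightarrow> nat \<Rightarrow> 'a \<Rightarrow> ennreal) \<Rightarrow> bool" where
  "asymptotic_eprocess Ps F r E \<longleftrightarrow>
     (\<forall>\<tau>. (\<forall>m. \<tau> m \<in> bounded_stopping_times (r m) (F m) Ps) \<longrightarrow>
        limsup (\<lambda>m. SUP P\<in>Ps. \<integral>\<^sup>+ \<omega>. stopped (E m) (\<tau> m) \<omega> \<partial>P) \<le> 1)"

definition eprocess ::
    "'a measure set \<Rightarrow> (nat \<Rightarrow> 'a measure) \<Rightarrow> (nat \<Rightarrow> 'a \<Rightarrow> ennreal) \<Rightarrow> bool" where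
  "eprocess Ps G X \<longleftrightarrow> (\<forall>n. X n \<in> borel_measurable (G n)) \<and>
     (\<forall>\<tau>. stopping_time G \<tau> \<longrightarrow> (\<forall>P\<in>Ps. (\<integral>\<^sup>+ \<omega>. stopped X \<tau> \<omega> \<partial>P) \<le> 1))"

definition P_integrable :: "'a measure \<Rightarrow> ('a \<Rightarrow> ennreal) \<Rightarrow> bool" where
  "P_integrable P X \<longleftrightarrow> X \<in> borel_measurable P \<and> (\<integral>\<^sup>+ \<omega>. X \<omega> \<partial>P) < \<infinity>"

text \<open>|x - y| for [0,\<infinity>]-values (exact whenever one of them is finite).\<close>
definition absdiff :: "ennreal \<Rightarrow> ennreal \<Rightarrow> ennreal" where
  "absdiff x y = (x - y) + (y - x)"

definition L1_dist_sup :: "'a measure set \<Rightarrow> ('a \<Rightarrow> ennreal) \<Rightarrow> ('a \<Rightarrow> ennreal) \<Rightarrow> ennreal" where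
  "L1_dist_sup Ps X Y = (SUP P\<in>Ps. \<integral>\<^sup>+ \<omega>. absdiff (X \<omega>) (Y \<omega>) \<partial>P)"

definition L1_unif_conv ::
    "'a measure set \<Rightarrow> (nat \<Rightarrow> nat \<Rightarrow> 'a \<Rightarrow> ennreal) \<Rightarrow> (nat \<Rightarrow> 'a \<Rightarrow> ennreal) \<Rightarrow> bool" where
  "L1_unif_conv Ps E G \<longleftrightarrow>
     (\<forall>P\<in>Ps. (\<forall>m n. P_integrable P (E m n)) \<and> (\<forall>n. P_integrable P (G n))) \<and>
     (\<forall>n. (\<lambda>m. L1_dist_sup Ps (E m n) (G n)) \<longlonglongrightarrow> 0)"

definition tends_to_infinity :: "(nat \<Rightarrow> enat) \<Rightarrow> bool" where
  "tends_to_infinity r \<longleftrightarrow> (\<forall>K::nat. eventually (\<lambda>m. enat K \<le> r m) sequentially)"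

text \<open>lim_m sum_{n=0}^{r_m} sup_P E_P|E_{m,n} - G_n| = 0 (the sum is infinite if r_m = \<infinity>).\<close>
definition sum_condition ::
    "'a measure set \<Rightarrow> (nat \<Rightarrow> nat \<Rightarrow> 'a \<Rightarrow> ennreal) \<Rightarrow> (nat \<Rightarrow> 'a \<Rightarrow> ennreal) \<Rightarrow> (nat \<Rightarrow> enat) \<Rightarrow> bool" where
  "sum_condition Ps E G r \<longleftrightarrow>
     (\<lambda>m. \<Sum>n. (if enat n \<le> r m then L1_dist_sup Ps (E m n) (G n) else 0)) \<longlonglongrightarrow> 0"

end

theory Submission
  imports Defs
begin

text \<open>
  If G is an e-process, then pathwise E_{m,\<tau>} \<le> G_\<tau> + \<Sum>_{n \<le> r_m} |E_{m,n} - G_n|, so E is an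
  r-asymptotic e-process as soon as the expected error sum vanishes; a diagonal argument
  produces such r with r_m \<rightarrow> \<infinity>.

  Conversely, a bounded F_{\<infinity>,\<bullet>}-stopping time \<sigma> agrees, off a set of small measure, with a
  hitting time of sets from F_{m0,\<bullet>}, which is an F_{m,\<bullet>}-stopping time for every m \<ge> m0;
  along it E_m converges to G in L1, so E[G_\<sigma>] \<le> 1. Passing from bounded to arbitrary
  stopping times needs care because X_\<infinity> = limsup X_n: X_\<tau> is the limsup of X_{min \<tau> n},
  and to bound E[limsup X_n] one stops at the first time after N at which X_n comes within \<delta>
  of a G_N-measurable approximation of a simple minorant of limsup X_n.
\<close>

definition filtration_limit :: "'a measure \<Rightarrow> (nat \<Rightarrow> 'a measure) \<Rightarrow> 'a measure" where
  "filtration_limit M G = sigma (space M) (\<Union>n. sets (G n))"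

lemma F_inf_eq_filtration_limit: "F_inf M F n = filtration_limit M (\<lambda>m. F m n)"
  by (simp add: F_inf_def filtration_limit_def)

lemma measurable_from_sub_sigma:
  "sub_sigma M N \<Longrightarrow> sets P = sets M \<Longrightarrow> f \<in> measurable N K \<Longrightarrow> f \<in> measurable P K"
  by (rule measurable_from_subalg)
    (auto simp: subalgebra_def sub_sigma_def dest: sets_eq_imp_space_eq)

lemma filtration_sub_sigma: "filtration M G \<Longrightarrow> sub_sigma M (G n)"
  by (simp add: filtration_def)

lemma filtration_space: "filtration M G \<Longrightarrow> space (G n) = space M"
  by (simp add: filtration_def sub_sigma_def)

lemma filtration_sets_subset: "filtration M G \<Longrightarrow> sets (G n) \<subseteq> sets M"
  by (simp add: filtration_def sub_sigma_def)

lemma filtration_mono: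
  assumes "filtration M G" "n \<le> n'"
  shows "sets (G n) \<subseteq> sets (G n')"
proof -
  have "\<And>n. sets (G n) \<subseteq> sets (G (Suc n))" using assms(1) by (simp add: filtration_def)
  then show ?thesis using assms(2) by (rule lift_Suc_mono_le)
qed

lemma measurable_filtration_mono:
  assumes "filtration M G" "k \<le> n" "f \<in> measurable (G k) N"
  shows "f \<in> measurable (G n) N"
  using assms filtration_mono[OF assms(1,2)]
  by (intro measurable_from_subalg[OF _ assms(3)]) (simp add: subalgebra_def filtration_space)

lemma
  assumes "filtration M G"
  shows sets_filtration_limit: "sets (filtration_limit M G) = sigma_sets (space M) (\<Union>n. sets (G n))"
    and space_filtration_limit: "space (filtration_limit M G) = space M"
proof -
  have "(\<Union>n. sets (G n)) \<subseteq> Pow (space M)"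
    using filtration_sets_subset[OF assms] sets.sets_into_space by blast
  then show "sets (filtration_limit M G) = sigma_sets (space M) (\<Union>n. sets (G n))"
    and "space (filtration_limit M G) = space M"
    by (simp_all add: filtration_limit_def)
qed

lemma sub_sigma_filtration_limit:
  assumes "filtration M G"
  shows "sub_sigma M (filtration_limit M G)"
proof -
  have "(\<Union>n. sets (G n)) \<subseteq> sets M" using filtration_sets_subset[OF assms] by blast
  then show ?thesis
    by (simp add: sub_sigma_def sets_filtration_limit[OF assms] space_filtration_limit[OF assms]
        sets.sigma_sets_subset)
qed

lemma sets_subset_filtration_limit: "filtration M G \<Longrightarrow> sets (G n) \<subseteq> sets (filtration_limit M G)"
  by (auto simp: sets_filtration_limit)

lemma
  assumes "filtration_array M F"
  shows filtration_array_row: "filtration M (F m)"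
    and filtration_array_column: "filtration M (\<lambda>m. F m n)"
  using assms
  by (auto simp: filtration_array_def filtration_sequence_def filtration_def sub_sigma_def)

lemma filtration_F_inf:
  assumes "filtration_array M F"
  shows "filtration M (F_inf M F)"
proof -
  note column = filtration_array_column[OF assms]
  have "sets (F_inf M F n) \<subseteq> sets (F_inf M F (Suc n))" for n
  proof -
    have "sets (F m n) \<subseteq> sets (F m (Suc n))" for m
      by (rule filtration_mono[OF filtration_array_row[OF assms]]) simp
    then have "(\<Union>m. sets (F m n)) \<subseteq> (\<Union>m. sets (F m (Suc n)))" by blast
    then show ?thesis
      unfolding F_inf_eq_filtration_limit sets_filtration_limit[OF column] by (rule sigma_sets_subseteq)
  qed
  then show ?thesis
    unfolding filtration_def F_inf_eq_filtration_limit using sub_sigma_filtration_limit[OF column] by simp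
qed

lemma sets_subset_F_inf: "filtration_array M F \<Longrightarrow> sets (F m n) \<subseteq> sets (F_inf M F n)"
  unfolding F_inf_eq_filtration_limit
  by (rule sets_subset_filtration_limit[OF filtration_array_column])

lemma stopping_timeD: "stopping_time G \<tau> \<Longrightarrow> {\<omega>\<in>space (G n). \<tau> \<omega> \<le> enat n} \<in> sets (G n)"
  by (simp add: stopping_time_def)

lemma stopping_time_const: "stopping_time G (\<lambda>_. enat n)"
  unfolding stopping_time_def
proof
  fix k
  have "{\<omega>\<in>space (G k). enat n \<le> enat k} \<in> {{}, space (G k)}" by auto
  then show "{\<omega>\<in>space (G k). enat n \<le> enat k} \<in> sets (G k)" by auto
qed

lemma stopping_time_min:
  assumes "stopping_time G \<sigma>" "stopping_time G \<tau>"
  shows "stopping_time G (\<lambda>\<omega>. min (\<sigma> \<omega>) (\<tau> \<omega>))"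
  unfolding stopping_time_def
proof
  fix n
  have "{\<omega>\<in>space (G n). min (\<sigma> \<omega>) (\<tau> \<omega>) \<le> enat n}
      = {\<omega>\<in>space (G n). \<sigma> \<omega> \<le> enat n} \<union> {\<omega>\<in>space (G n). \<tau> \<omega> \<le> enat n}"
    by (auto simp: min_le_iff_disj)
  then show "{\<omega>\<in>space (G n). min (\<sigma> \<omega>) (\<tau> \<omega>) \<le> enat n} \<in> sets (G n)"
    using assms by (auto dest: stopping_timeD)
qed

lemma stopping_time_eq_sets:
  assumes "filtration M G" "stopping_time G \<tau>"
  shows "{\<omega>\<in>space M. \<tau> \<omega> = enat n} \<in> sets (G n)"
proof (cases n)
  case 0
  then have "{\<omega>\<in>space M. \<tau> \<omega> = enat n} = {\<omega>\<in>space (G 0). \<tau> \<omega> \<le> enat 0}"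
    using filtration_space[OF assms(1)] by (auto simp: enat_0)
  then show ?thesis using stopping_timeD[OF assms(2)] 0 by simp
next
  case (Suc k)
  have "t = enat n \<longleftrightarrow> t \<le> enat n \<and> \<not> t \<le> enat k" for t :: enat
    using Suc by (cases t) auto
  then have "{\<omega>\<in>space M. \<tau> \<omega> = enat n}
      = {\<omega>\<in>space (G n). \<tau> \<omega> \<le> enat n} - {\<omega>\<in>space (G k). \<tau> \<omega> \<le> enat k}"
    using filtration_space[OF assms(1)] by auto
  moreover have "{\<omega>\<in>space (G k). \<tau> \<omega> \<le> enat k} \<in> sets (G n)"
    using stopping_timeD[OF assms(2)] filtration_mono[OF assms(1), of k n] Suc by auto
  ultimately show ?thesis using stopping_timeD[OF assms(2), of n] by auto
qed

lemma stopping_time_bounded_sets: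
  assumes "filtration M G" "stopping_time G \<tau>" "\<forall>\<omega>\<in>space M. \<tau> \<omega> \<le> enat n"
  shows "{\<omega>\<in>space (G n). \<tau> \<omega> \<le> enat k} \<in> sets (G n)"
proof (cases "n \<le> k")
  case True
  then have "{\<omega>\<in>space (G n). \<tau> \<omega> \<le> enat k} = space (G n)"
    using assms(3) filtration_space[OF assms(1)] order_trans by fastforce
  then show ?thesis by simp
next
  case False
  then show ?thesis
    using stopping_timeD[OF assms(2), of k] filtration_mono[OF assms(1), of k n]
    by (auto simp: filtration_space[OF assms(1)])
qed

lemma measurable_enat_if_le_sets:
  fixes \<tau> :: "'a \<Rightarrow> enat"
  assumes "\<forall>n. {\<omega>\<in>space N. \<tau> \<omega> \<le> enat n} \<in> sets N"
  shows "\<tau> \<in> measurable N (count_space UNIV)"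
proof -
  have "\<tau> -` {enat n} \<inter> space N \<in> sets N" for n
  proof -
    have "t = enat n \<longleftrightarrow> t \<le> enat n \<and> \<not> (\<exists>k<n. t \<le> enat k)" for t :: enat
      by (cases t) (auto simp: le_less)
    then have "\<tau> -` {enat n} \<inter> space N
        = {\<omega>\<in>space N. \<tau> \<omega> \<le> enat n} - (\<Union>k\<in>{k. k < n}. {\<omega>\<in>space N. \<tau> \<omega> \<le> enat k})"
      by auto
    then show ?thesis using assms by auto
  qed
  moreover have "t = \<infinity> \<longleftrightarrow> (\<forall>n. \<not> t \<le> enat n)" for t :: enat
    by (cases t) auto
  then have "\<tau> -` {\<infinity>} \<inter> space N = space N - (\<Union>n. {\<omega>\<in>space N. \<tau> \<omega> \<le> enat n})"
    by auto
  then have "\<tau> -` {\<infinity>} \<inter> space N \<in> sets N" using assms by auto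
  ultimately have "\<tau> -` {t} \<inter> space N \<in> sets N" for t by (cases t) auto
  then show ?thesis by (simp add: measurable_count_space_eq2_countable)
qed

lemma measurable_stopping_time:
  assumes "filtration M G" "stopping_time G \<tau>" "sets N = sets M"
  shows "\<tau> \<in> measurable N (count_space UNIV)"
proof (rule measurable_enat_if_le_sets, intro allI)
  fix n
  have "{\<omega>\<in>space M. \<tau> \<omega> \<le> enat n} \<in> sets M"
    using stopping_timeD[OF assms(2), of n] filtration_sets_subset[OF assms(1), of n]
    by (auto simp: filtration_space[OF assms(1)])
  then show "{\<omega>\<in>space N. \<tau> \<omega> \<le> enat n} \<in> sets N"
    using assms(3) sets_eq_imp_space_eq[OF assms(3)] by simp
qed

lemma borel_measurable_stopped:
  assumes "\<tau> \<in> measurable N (count_space UNIV)" "\<forall>n. X n \<in> borel_measurable N"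
  shows "stopped X \<tau> \<in> borel_measurable N"
proof -
  have "stopped X \<tau> = (\<lambda>\<omega>. (\<lambda>t \<omega>. case t of enat n \<Rightarrow> X n \<omega> | \<infinity> \<Rightarrow> limsup (\<lambda>n. X n \<omega>)) (\<tau> \<omega>) \<omega>)"
    by (simp add: stopped_def fun_eq_iff)
  also have "\<dots> \<in> borel_measurable N"
  proof (rule measurable_compose_countable[OF _ assms(1)])
    fix t :: enat
    show "(\<lambda>\<omega>. case t of enat n \<Rightarrow> X n \<omega> | \<infinity> \<Rightarrow> limsup (\<lambda>n. X n \<omega>)) \<in> borel_measurable N"
      using assms(2) by (cases t) (auto intro: borel_measurable_limsup)
  qed
  finally show ?thesis .
qed

lemma borel_measurable_stopped_bounded:
  assumes "filtration M G" "stopping_time G \<tau>" "\<forall>\<omega>\<in>space M. \<tau> \<omega> \<le> enat n"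
    and "\<forall>k. X k \<in> borel_measurable (G k)"
  shows "stopped X \<tau> \<in> borel_measurable (G n)"
proof -
  have "stopped (\<lambda>k. X (min k n)) \<tau> \<in> borel_measurable (G n)"
  proof (rule borel_measurable_stopped)
    show "\<tau> \<in> measurable (G n) (count_space UNIV)"
      using stopping_time_bounded_sets[OF assms(1-3)] by (intro measurable_enat_if_le_sets) auto
    show "\<forall>k. X (min k n) \<in> borel_measurable (G n)"
      using assms(4) measurable_filtration_mono[OF assms(1)] by (metis min.cobounded2)
  qed
  moreover have "stopped (\<lambda>k. X (min k n)) \<tau> \<omega> = stopped X \<tau> \<omega>" if "\<omega> \<in> space (G n)" for \<omega>
    using assms(3) that by (cases "\<tau> \<omega>") (auto simp: stopped_def filtration_space[OF assms(1)])
  ultimately show ?thesis by (rule measurable_cong[THEN iffD1, rotated])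
qed

lemma stopped_le_sum: "\<sigma> \<omega> \<le> enat K \<Longrightarrow> stopped X \<sigma> \<omega> \<le> (\<Sum>j\<le>K. X j \<omega>)"
  by (cases "\<sigma> \<omega>") (auto simp: stopped_def intro: member_le_sum)

definition hitting_time_upto :: "nat \<Rightarrow> (nat \<Rightarrow> bool) \<Rightarrow> nat" where
  "hitting_time_upto K Q = (LEAST k. K \<le> k \<or> Q k)"

lemma hitting_time_upto_le: "hitting_time_upto K Q \<le> K"
  unfolding hitting_time_upto_def by (rule Least_le) simp

lemma hitting_time_upto_cases: "Q (hitting_time_upto K Q) \<or> hitting_time_upto K Q = K"
proof -
  have "K \<le> hitting_time_upto K Q \<or> Q (hitting_time_upto K Q)"
    unfolding hitting_time_upto_def by (rule LeastI[of _ K]) simp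
  then show ?thesis using hitting_time_upto_le[of K Q] by auto
qed

lemma not_before_hitting_time_upto: "k < hitting_time_upto K Q \<Longrightarrow> \<not> Q k"
  unfolding hitting_time_upto_def using not_less_Least by blast

lemma hitting_time_upto_le_iff: "hitting_time_upto K Q \<le> n \<longleftrightarrow> K \<le> n \<or> (\<exists>k\<le>n. Q k)"
  using hitting_time_upto_le[of K Q] hitting_time_upto_cases[of Q K] not_before_hitting_time_upto[of _ K Q]
  by (metis le_trans not_le)

lemma hitting_time_upto_eqI: "j \<le> K \<Longrightarrow> Q j \<Longrightarrow> (\<And>k. k < j \<Longrightarrow> \<not> Q k) \<Longrightarrow> hitting_time_upto K Q = j"
  unfolding hitting_time_upto_def by (rule Least_equality) (auto simp: not_le[symmetric])

lemma stopping_time_hitting_time_upto: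
  assumes "filtration M G" "\<forall>k. {\<omega>\<in>space M. Q k \<omega>} \<in> sets (G k)"
  shows "stopping_time G (\<lambda>\<omega>. enat (hitting_time_upto K (\<lambda>k. Q k \<omega>)))"
  unfolding stopping_time_def
proof
  fix n
  have "{\<omega>\<in>space (G n). enat (hitting_time_upto K (\<lambda>k. Q k \<omega>)) \<le> enat n}
      = (if K \<le> n then space M else (\<Union>k\<le>n. {\<omega>\<in>space M. Q k \<omega>}))"
    by (auto simp: hitting_time_upto_le_iff filtration_space[OF assms(1)])
  moreover have "{\<omega>\<in>space M. Q k \<omega>} \<in> sets (G n)" if "k \<le> n" for k
    using assms(2) filtration_mono[OF assms(1) that] by blast
  ultimately show "{\<omega>\<in>space (G n). enat (hitting_time_upto K (\<lambda>k. Q k \<omega>)) \<le> enat n} \<in> sets (G n)"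
    using sets.top[of "G n"] by (auto simp: filtration_space[OF assms(1)])
qed

lemma stopping_time_first_entry:
  assumes "filtration M G" "\<forall>j\<le>K. B j \<in> sets (G j)"
  shows "stopping_time G (\<lambda>\<omega>. enat (hitting_time_upto K (\<lambda>j. j \<le> K \<and> \<omega> \<in> B j)))"
proof (intro stopping_time_hitting_time_upto[OF assms(1)] allI)
  fix j
  show "{\<omega>\<in>space M. j \<le> K \<and> \<omega> \<in> B j} \<in> sets (G j)"
  proof (cases "j \<le> K")
    case True
    then have "{\<omega>\<in>space M. j \<le> K \<and> \<omega> \<in> B j} = B j"
      using assms(2) sets.sets_into_space[of "B j" "G j"] by (auto simp: filtration_space[OF assms(1)])
    then show ?thesis using True assms(2) by simp
  qed simp
qed

lemma hitting_time_upto_reaches: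
  fixes x :: "nat \<Rightarrow> 'b::linorder"
  assumes "N \<le> N'"
  shows "c \<le> x (hitting_time_upto N' (\<lambda>k. N \<le> k \<and> c \<le> x k)) \<or> (\<forall>k\<in>{N..N'}. x k < c)"
proof -
  define \<rho> where "\<rho> = hitting_time_upto N' (\<lambda>k. N \<le> k \<and> c \<le> x k)"
  have "x k < c" if "k \<in> {N..N'}" "\<not> c \<le> x \<rho>" for k
  proof (cases "k < \<rho>")
    case True
    then show ?thesis using not_before_hitting_time_upto[OF True[unfolded \<rho>_def]] that(1) by auto
  next
    case False
    then have "\<rho> = N'"
      using hitting_time_upto_cases[of "\<lambda>k. N \<le> k \<and> c \<le> x k" N'] that(2) by (auto simp: \<rho>_def)
    then show ?thesis using False that hitting_time_upto_le[of N'] by (auto simp: \<rho>_def)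
  qed
  then show ?thesis unfolding \<rho>_def by blast
qed

section \<open>Approximation in measure from an increasing filtration\<close>

definition approximable :: "'a measure \<Rightarrow> (nat \<Rightarrow> 'a measure) \<Rightarrow> 'a set \<Rightarrow> bool" where
  "approximable Q G A \<longleftrightarrow> (\<forall>\<eta>>0. \<exists>k. \<exists>B\<in>sets (G k). measure Q (sym_diff A B) < \<eta>)"

lemma approximable_simultaneously:
  assumes "finite I" "sets Q = sets M"
    and "\<forall>i\<in>I. filtration M (G i)" "\<forall>i\<in>I. A i \<in> sets M" "\<forall>i\<in>I. approximable Q (G i) (A i)"
    and "\<eta> > 0"
  shows "\<exists>k B. (\<forall>i\<in>I. B i \<in> sets (G i k)) \<and> measure Q (\<Union>i\<in>I. sym_diff (A i) (B i)) < \<eta>"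
  using assms(1,3-6)
proof (induction I arbitrary: \<eta> rule: finite_induct)
  case empty
  then show ?case by simp
next
  case (insert j I)
  have "\<exists>k B. (\<forall>i\<in>I. B i \<in> sets (G i k)) \<and> measure Q (\<Union>i\<in>I. sym_diff (A i) (B i)) < \<eta>/2"
    using insert.prems by (intro insert.IH) auto
  then obtain k1 B1 where B1: "\<forall>i\<in>I. B1 i \<in> sets (G i k1)" "measure Q (\<Union>i\<in>I. sym_diff (A i) (B1 i)) < \<eta>/2"
    by blast
  obtain k2 b where b: "b \<in> sets (G j k2)" "measure Q (sym_diff (A j) b) < \<eta>/2"
    using insert.prems(3) \<open>\<eta> > 0\<close> unfolding approximable_def by (meson half_gt_zero insertI1)
  define B where "B = B1(j := b)"
  have "B i \<in> sets (G i (max k1 k2))" if "i \<in> insert j I" for i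
  proof -
    have filt: "filtration M (G i)" using that insert.prems(1) by blast
    show ?thesis
    proof (cases "i = j")
      case True
      then show ?thesis using b(1) filtration_mono[OF filt, of k2 "max k1 k2"] by (auto simp: B_def)
    next
      case False
      then have "B1 i \<in> sets (G i k1)" using that B1(1) by simp
      then show ?thesis using False filtration_mono[OF filt, of k1 "max k1 k2"] by (auto simp: B_def)
    qed
  qed
  moreover have "measure Q (\<Union>i\<in>insert j I. sym_diff (A i) (B i)) < \<eta>"
  proof -
    have in_M: "X \<in> sets M" if "X \<in> sets (G i k)" "i \<in> insert j I" for X i k
      using that(1) filtration_sets_subset[of M "G i" k] that(2) insert.prems(1) by auto
    have "sym_diff (A j) b \<in> sets Q"
      using in_M[OF b(1)] insert.prems(2) assms(2) by auto
    moreover have "sym_diff (A i) (B1 i) \<in> sets M" if "i \<in> I" for i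
      using in_M[of "B1 i" i k1] B1(1) insert.prems(2) that by auto
    then have "(\<Union>i\<in>I. sym_diff (A i) (B1 i)) \<in> sets Q"
      using assms(2) insert.hyps(1) by (simp add: sets.finite_UN)
    moreover have "(\<Union>i\<in>I. sym_diff (A i) (B i)) = (\<Union>i\<in>I. sym_diff (A i) (B1 i))"
      using insert.hyps(2) unfolding B_def by (intro SUP_cong) auto
    then have "(\<Union>i\<in>insert j I. sym_diff (A i) (B i)) = sym_diff (A j) b \<union> (\<Union>i\<in>I. sym_diff (A i) (B1 i))"
      by (simp add: B_def)
    ultimately have "measure Q (\<Union>i\<in>insert j I. sym_diff (A i) (B i))
        \<le> measure Q (sym_diff (A j) b) + measure Q (\<Union>i\<in>I. sym_diff (A i) (B1 i))"
      by (simp add: measure_Un_le)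
    then show ?thesis using B1(2) b(2) by linarith
  qed
  ultimately show ?case by (intro exI[of _ "max k1 k2"] exI[of _ B]) simp
qed

lemma approximable_Diff_space:
  assumes "filtration M G" "a \<subseteq> space M" "approximable Q G a"
  shows "approximable Q G (space M - a)"
  unfolding approximable_def
proof (intro allI impI)
  fix \<eta> :: real assume "\<eta> > 0"
  then obtain k B where B: "B \<in> sets (G k)" "measure Q (sym_diff a B) < \<eta>"
    using assms(3) unfolding approximable_def by blast
  then have "space M - B \<in> sets (G k)"
    using sets.compl_sets[of B "G k"] by (simp add: filtration_space[OF assms(1)])
  moreover have "B \<subseteq> space M"
    using sets.sets_into_space[OF B(1)] by (simp add: filtration_space[OF assms(1)])
  then have "sym_diff (space M - a) (space M - B) = sym_diff a B" using assms(2) by blast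
  ultimately show "\<exists>k. \<exists>B'\<in>sets (G k). measure Q (sym_diff (space M - a) B') < \<eta>"
    using B(2) by (intro exI[of _ k] bexI[of _ "space M - B"]) simp_all
qed

lemma approximable_UN:
  fixes a :: "nat \<Rightarrow> 'a set"
  assumes "finite_measure Q" "sets Q = sets M" "filtration M G"
    and "range a \<subseteq> sets M" "\<And>i. approximable Q G (a i)"
  shows "approximable Q G (\<Union>i. a i)"
  unfolding approximable_def
proof (intro allI impI)
  interpret Q: finite_measure Q by (rule assms(1))
  fix \<eta> :: real assume "\<eta> > 0"
  have a_Q: "a i \<in> sets Q" for i using assms(2,4) by auto
  define U where "U n = (\<Union>i<n. a i)" for n
  have U_Q: "U n \<in> sets Q" for n unfolding U_def using a_Q by auto
  have "(\<lambda>n. measure Q (U n)) \<longlonglongrightarrow> measure Q (\<Union>n. U n)"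
    using U_Q by (intro Q.finite_Lim_measure_incseq) (auto simp: U_def incseq_def dest: order.strict_trans2)
  moreover have "(\<Union>n. U n) = (\<Union>i. a i)" by (auto simp: U_def)
  ultimately have "(\<lambda>n. measure Q (U n)) \<longlonglongrightarrow> measure Q (\<Union>i. a i)" by simp
  from LIMSEQ_D[OF this half_gt_zero[OF \<open>\<eta> > 0\<close>]] obtain n
    where "norm (measure Q (U n) - measure Q (\<Union>i. a i)) < \<eta>/2" by blast
  then have n: "measure Q (\<Union>i. a i) - measure Q (U n) < \<eta>/2"
    unfolding real_norm_def abs_less_iff by linarith
  obtain k B where B: "\<forall>i\<in>{..<n}. B i \<in> sets (G k)"
    "measure Q (\<Union>i<n. sym_diff (a i) (B i)) < \<eta>/2"
    using approximable_simultaneously[of "{..<n}" Q M "\<lambda>_. G" a "\<eta>/2"] assms(2-5) \<open>\<eta> > 0\<close>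
    by auto
  have "(\<Union>i<n. B i) \<in> sets (G k)" using B(1) by auto
  moreover have "measure Q (sym_diff (\<Union>i. a i) (\<Union>i<n. B i)) < \<eta>"
  proof -
    have B_Q: "B i \<in> sets Q" if "i < n" for i
      using B(1) that filtration_sets_subset[OF assms(3)] assms(2) by auto
    have "sym_diff (\<Union>i. a i) (\<Union>i<n. B i) \<subseteq> ((\<Union>i. a i) - U n) \<union> (\<Union>i<n. sym_diff (a i) (B i))"
      by (auto simp: U_def)
    then have "measure Q (sym_diff (\<Union>i. a i) (\<Union>i<n. B i))
        \<le> measure Q ((\<Union>i. a i) - U n) + measure Q (\<Union>i<n. sym_diff (a i) (B i))"
      using a_Q U_Q B_Q
      by (intro order_trans[OF Q.finite_measure_mono measure_Un_le]) auto
    moreover have "measure Q ((\<Union>i. a i) - U n) = measure Q (\<Union>i. a i) - measure Q (U n)"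
      using a_Q U_Q by (intro Q.finite_measure_Diff) (auto simp: U_def)
    ultimately show ?thesis using n B(2) by linarith
  qed
  ultimately show "\<exists>k. \<exists>B\<in>sets (G k). measure Q (sym_diff (\<Union>i. a i) B) < \<eta>" by blast
qed

lemma approximable_filtration_limit:
  assumes "finite_measure Q" "sets Q = sets M" "filtration M G"
    and "A \<in> sets (filtration_limit M G)"
  shows "approximable Q G A"
proof -
  have generators: "(\<Union>n. sets (G n)) \<subseteq> sets M"
    using filtration_sets_subset[OF assms(3)] by blast
  have "A \<in> sigma_sets (space M) (\<Union>n. sets (G n))"
    using assms(4) sets_filtration_limit[OF assms(3)] by simp
  then show ?thesis
  proof (induction rule: sigma_sets.induct)
    case (Basic a)
    then obtain k where "a \<in> sets (G k)" by blast
    then show ?case unfolding approximable_def by (intro allI impI exI[of _ k] bexI[of _ a]) simp_all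
  next
    case Empty
    have "{} \<in> sets (G 0)" by simp
    then show ?case unfolding approximable_def by (intro allI impI exI[of _ 0] bexI[of _ "{}"]) simp_all
  next
    case (Compl a)
    have "a \<in> sets M" using subsetD[OF sets.sigma_sets_subset[OF generators] Compl.hyps] .
    then have "a \<subseteq> space M" by (rule sets.sets_into_space)
    then show ?case by (rule approximable_Diff_space[OF assms(3) _ Compl.IH])
  next
    case (Union a)
    have "range a \<subseteq> sets M" using sets.sigma_sets_subset[OF generators] Union.hyps by blast
    then show ?case by (rule approximable_UN[OF assms(1-3) _ Union.IH])
  qed
qed

lemma simultaneous_approximation:
  assumes "finite_measure Q" "sets Q = sets M" "finite I"
    and "\<forall>i\<in>I. filtration M (G i)" "\<forall>i\<in>I. A i \<in> sets (filtration_limit M (G i))" "\<eta> > 0"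
  obtains k B where "\<forall>i\<in>I. B i \<in> sets (G i k)" "measure Q (\<Union>i\<in>I. sym_diff (A i) (B i)) < \<eta>"
proof -
  have "\<forall>i\<in>I. A i \<in> sets M"
    using assms(4,5) sub_sigma_filtration_limit by (fastforce simp: sub_sigma_def)
  moreover have "\<forall>i\<in>I. approximable Q (G i) (A i)"
    using assms(1,2,4,5) by (auto intro: approximable_filtration_limit)
  ultimately show ?thesis
    using approximable_simultaneously[OF assms(3,2,4)] assms(6) that by blast
qed

lemma simple_function_approximation:
  fixes g :: "'a \<Rightarrow> ennreal"
  assumes "finite_measure Q" "sets Q = sets M" "filtration M G"
    and "simple_function (filtration_limit M G) g" "\<eta> > 0"
  obtains N h D where "h \<in> borel_measurable (G N)" "D \<in> sets M" "measure Q D < \<eta>"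
    "\<forall>\<omega>\<in>space M - D. h \<omega> = g \<omega>"
proof -
  define V where "V = g ` space M"
  define A where "A c = g -` {c} \<inter> space M" for c
  have "finite V"
    using simple_functionD(1)[OF assms(4)] by (simp add: V_def space_filtration_limit[OF assms(3)])
  moreover have "A c \<in> sets (filtration_limit M G)" for c
    using simple_functionD(2)[OF assms(4), of "{c}"] by (simp add: A_def space_filtration_limit[OF assms(3)])
  ultimately obtain N B where B: "\<forall>c\<in>V. B c \<in> sets (G N)" "measure Q (\<Union>c\<in>V. sym_diff (A c) (B c)) < \<eta>"
    using simultaneous_approximation[OF assms(1,2), of V "\<lambda>_. G" A \<eta>] assms(3,5) by blast
  define D where "D = (\<Union>c\<in>V. sym_diff (A c) (B c))"
  define h where "h \<omega> = (SUP c\<in>V. c * indicator (B c) \<omega>)" for \<omega>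
  have "h \<in> borel_measurable (G N)"
    unfolding h_def using \<open>finite V\<close> B(1) by (intro borel_measurable_SUP) (auto simp: countable_finite)
  moreover have "D \<in> sets M"
  proof -
    have "A c \<in> sets M" for c
      using \<open>A c \<in> sets (filtration_limit M G)\<close> sub_sigma_filtration_limit[OF assms(3)]
      by (auto simp: sub_sigma_def)
    moreover have "B c \<in> sets M" if "c \<in> V" for c
      using B(1) that filtration_sets_subset[OF assms(3)] by blast
    ultimately show ?thesis unfolding D_def using \<open>finite V\<close> by auto
  qed
  moreover have "h \<omega> = g \<omega>" if "\<omega> \<in> space M - D" for \<omega>
  proof -
    have "\<omega> \<in> B c \<longleftrightarrow> c = g \<omega>" if "c \<in> V" for c
    proof -
      have "\<omega> \<notin> sym_diff (A c) (B c)" using \<open>\<omega> \<in> space M - D\<close> that unfolding D_def by blast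
      then show ?thesis using \<open>\<omega> \<in> space M - D\<close> by (auto simp: A_def)
    qed
    then have "h \<omega> = (SUP c\<in>V. if c = g \<omega> then c else 0)"
      unfolding h_def by (intro SUP_cong) auto
    also have "\<dots> = g \<omega>"
      using that by (intro antisym SUP_least SUP_upper2[of "g \<omega>"]) (auto simp: V_def)
    finally show ?thesis .
  qed
  ultimately show ?thesis using that B(2) unfolding D_def by blast
qed

text \<open>The level set {\<sigma> = j} \<in> F_{\<infinity>,j} is approximated by B_j \<in> F_{m0,j}, and the first j with
  \<omega> \<in> B_j is an F_{m,\<bullet>}-stopping time for every m \<ge> m0.\<close>
lemma approximate_stopping_time_F_inf:
  assumes "filtration_array M F" "finite_measure Q" "sets Q = sets M"
    and "stopping_time (F_inf M F) \<sigma>" "\<forall>\<omega>\<in>space M. \<sigma> \<omega> \<le> enat K" "\<eta> > 0"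
  obtains m0 \<tau> D where "\<forall>m\<ge>m0. stopping_time (F m) \<tau>" "\<forall>\<omega>. \<tau> \<omega> \<le> enat K"
    "D \<in> sets M" "measure Q D < \<eta>" "\<forall>\<omega>\<in>space M - D. \<tau> \<omega> = \<sigma> \<omega>"
proof -
  define S where "S j = {\<omega>\<in>space M. \<sigma> \<omega> = enat j}" for j
  have S: "S j \<in> sets (filtration_limit M (\<lambda>m. F m j))" for j
    using stopping_time_eq_sets[OF filtration_F_inf[OF assms(1)] assms(4)]
    by (simp add: S_def F_inf_eq_filtration_limit)
  obtain m0 B where B: "\<forall>j\<in>{..K}. B j \<in> sets (F m0 j)"
    and small: "measure Q (\<Union>j\<in>{..K}. sym_diff (S j) (B j)) < \<eta>"
    by (rule simultaneous_approximation[where G = "\<lambda>j m. F m j" and A = S,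
          OF assms(2,3) finite_atMost _ _ assms(6)])
      (use filtration_array_column[OF assms(1)] S in auto)
  define \<tau> where "\<tau> \<omega> = enat (hitting_time_upto K (\<lambda>j. j \<le> K \<and> \<omega> \<in> B j))" for \<omega>
  have "stopping_time (F m) \<tau>" if "m0 \<le> m" for m
    unfolding \<tau>_def
    using B filtration_mono[OF filtration_array_column[OF assms(1)] that]
    by (intro stopping_time_first_entry[OF filtration_array_row[OF assms(1)]]) auto
  moreover have "\<forall>\<omega>. \<tau> \<omega> \<le> enat K" by (simp add: \<tau>_def hitting_time_upto_le)
  moreover have "(\<Union>j\<in>{..K}. sym_diff (S j) (B j)) \<in> sets M"
  proof -
    have "S j \<in> sets M" for j
      using S[of j] sub_sigma_filtration_limit[OF filtration_array_column[OF assms(1)]]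
      by (auto simp: sub_sigma_def)
    moreover have "B j \<in> sets M" if "j \<le> K" for j
      using B that filtration_sets_subset[OF filtration_array_row[OF assms(1)], of m0 j] by auto
    ultimately show ?thesis by auto
  qed
  moreover have "\<tau> \<omega> = \<sigma> \<omega>" if \<omega>: "\<omega> \<in> space M - (\<Union>j\<in>{..K}. sym_diff (S j) (B j))" for \<omega>
  proof -
    obtain s where s: "\<sigma> \<omega> = enat s" "s \<le> K" using assms(5) \<omega> by (cases "\<sigma> \<omega>") auto
    have "\<omega> \<in> B j \<longleftrightarrow> j = s" if "j \<le> K" for j
    proof -
      have "\<omega> \<notin> sym_diff (S j) (B j)" using \<omega> that by blast
      moreover have "\<omega> \<in> S j \<longleftrightarrow> j = s" using \<omega> s(1) by (auto simp: S_def)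
      ultimately show ?thesis by blast
    qed
    then have "hitting_time_upto K (\<lambda>j. j \<le> K \<and> \<omega> \<in> B j) = s"
      using s(2) by (intro hitting_time_upto_eqI) auto
    then show ?thesis by (simp add: \<tau>_def s(1))
  qed
  ultimately show ?thesis using small by (intro that[of m0 \<tau> "\<Union>j\<in>{..K}. sym_diff (S j) (B j)"]) auto
qed

section \<open>Bounded stopping times suffice\<close>

lemma exists_ge_minus_if_le_limsup:
  fixes x :: "nat \<Rightarrow> ennreal"
  assumes "c \<le> limsup x" "c < \<top>" "\<delta> > 0"
  shows "\<exists>k\<ge>N. c - ennreal \<delta> \<le> x k"
proof (cases "c = 0")
  case False
  show ?thesis
  proof (rule ccontr)
    assume "\<not> (\<exists>k\<ge>N. c - ennreal \<delta> \<le> x k)"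
    then have "\<forall>k\<ge>N. x k \<le> c - ennreal \<delta>" by (meson nle_le)
    then have "eventually (\<lambda>k. x k \<le> c - ennreal \<delta>) sequentially"
      unfolding eventually_sequentially by blast
    then have "limsup x \<le> c - ennreal \<delta>" by (rule Limsup_bounded)
    moreover have "c - ennreal \<delta> < c"
      using False assms(2,3) by (intro ennreal_between) (simp_all add: zero_less_iff_neq_zero)
    ultimately show False using assms(1) by simp
  qed
qed auto

lemma measure_stays_below_limsup_tendsto_0:
  fixes X :: "nat \<Rightarrow> 'a \<Rightarrow> ennreal"
  assumes "finite_measure P" "\<forall>n. X n \<in> borel_measurable P" "g \<in> borel_measurable P"
    and "\<forall>\<omega>\<in>space P. g \<omega> \<le> limsup (\<lambda>n. X n \<omega>) \<and> g \<omega> < \<top>" "\<delta> > 0"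
  shows "(\<lambda>n. measure P {\<omega>\<in>space P. \<forall>k\<in>{N..n}. X k \<omega> < g \<omega> - ennreal \<delta>}) \<longlonglongrightarrow> 0"
proof -
  define S where "S n = {\<omega>\<in>space P. \<forall>k\<in>{N..n}. X k \<omega> < g \<omega> - ennreal \<delta>}" for n
  have [measurable]: "X k \<in> borel_measurable P" "g \<in> borel_measurable P" for k
    using assms(2,3) by auto
  have "S n \<in> sets P" for n
    unfolding S_def by measurable
  moreover have "decseq S" unfolding S_def decseq_def by auto
  moreover have "(\<Inter>n. S n) = {}"
  proof safe
    fix \<omega> assume "\<omega> \<in> (\<Inter>n. S n)"
    then have "\<omega> \<in> S k" for k by blast
    then have "\<omega> \<in> space P" "\<forall>k\<ge>N. X k \<omega> < g \<omega> - ennreal \<delta>"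
      by (simp_all add: S_def) (meson atLeastAtMost_iff order_refl)
    with exists_ge_minus_if_le_limsup[of "g \<omega>" "\<lambda>n. X n \<omega>" \<delta> N] assms(4,5)
    show "\<omega> \<in> {}" by (auto simp: not_less[symmetric])
  qed
  ultimately have "(\<lambda>n. measure P (S n)) \<longlonglongrightarrow> measure P (\<Inter>n. S n)"
    by (intro finite_measure.finite_Lim_measure_decseq[OF assms(1)]) auto
  then show ?thesis by (simp add: S_def \<open>(\<Inter>n. S n) = {}\<close>[unfolded S_def])
qed

lemma stopping_time_first_approach:
  fixes X :: "nat \<Rightarrow> 'a \<Rightarrow> ennreal"
  assumes "filtration M G" "\<forall>n. X n \<in> borel_measurable (G n)" "h \<in> borel_measurable (G N)"
  shows "stopping_time G (\<lambda>\<omega>. enat (hitting_time_upto N' (\<lambda>k. N \<le> k \<and> h \<omega> - c \<le> X k \<omega>)))"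
proof (intro stopping_time_hitting_time_upto[OF assms(1)] allI)
  fix k
  show "{\<omega>\<in>space M. N \<le> k \<and> h \<omega> - c \<le> X k \<omega>} \<in> sets (G k)"
  proof (cases "N \<le> k")
    case True
    have [measurable]: "h \<in> borel_measurable (G k)" "X k \<in> borel_measurable (G k)"
      using measurable_filtration_mono[OF assms(1) True assms(3)] assms(2) by auto
    have "{\<omega>\<in>space (G k). h \<omega> - c \<le> X k \<omega>} \<in> sets (G k)" by measurable
    then show ?thesis using True by (simp add: filtration_space[OF assms(1)])
  qed simp
qed

definition bounded_time_eprocess :: "'a measure \<Rightarrow> (nat \<Rightarrow> 'a measure) \<Rightarrow> (nat \<Rightarrow> 'a \<Rightarrow> ennreal) \<Rightarrow> bool" where
  "bounded_time_eprocess P G X \<longleftrightarrow>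
     (\<forall>\<sigma> K. stopping_time G \<sigma> \<longrightarrow> (\<forall>\<omega>\<in>space P. \<sigma> \<omega> \<le> enat K) \<longrightarrow> (\<integral>\<^sup>+\<omega>. stopped X \<sigma> \<omega> \<partial>P) \<le> 1)"

lemma le_diff_add_ennreal: "(a::ennreal) \<le> a - b + b"
  by (auto simp: diff_add_self_ennreal)

text \<open>Stop at the first time k \<ge> N at which X_k comes within \<delta> of a G_N-measurable h that
  agrees with g off a small set. This fails only where X stays \<delta>-below g on [N, N'], which has
  small measure for large N' because g \<le> limsup X.\<close>
lemma bounded_stopping_time_near_limsup:
  fixes X :: "nat \<Rightarrow> 'a \<Rightarrow> ennreal"
  assumes "finite_measure P" "sets P = sets M" "filtration M G" "\<forall>n. X n \<in> borel_measurable (G n)"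
    and "simple_function (filtration_limit M G) g"
    and "\<forall>\<omega>\<in>space M. g \<omega> \<le> limsup (\<lambda>n. X n \<omega>) \<and> g \<omega> < \<top>" "\<delta> > 0" "\<eta> > 0"
  obtains \<rho> K D where "stopping_time G \<rho>" "\<forall>\<omega>. \<rho> \<omega> \<le> enat K" "D \<in> sets M" "measure P D < \<eta>"
    "\<forall>\<omega>\<in>space M - D. g \<omega> \<le> stopped X \<rho> \<omega> + ennreal \<delta>"
proof -
  have space_P: "space P = space M" using sets_eq_imp_space_eq[OF assms(2)] .
  have [measurable]: "X n \<in> borel_measurable P" for n
    using assms(2,4) measurable_from_sub_sigma[OF filtration_sub_sigma[OF assms(3)]] by blast
  obtain N h D where h: "h \<in> borel_measurable (G N)" "D \<in> sets M" "measure P D < \<eta>/2"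
    "\<forall>\<omega>\<in>space M - D. h \<omega> = g \<omega>"
    by (rule simple_function_approximation[OF assms(1-3,5) half_gt_zero[OF assms(8)]])
  have [measurable]: "g \<in> borel_measurable P"
    using borel_measurable_simple_function[OF assms(5)]
    by (rule measurable_from_sub_sigma[OF sub_sigma_filtration_limit[OF assms(3)] assms(2)])
  define S where "S n = {\<omega>\<in>space M. \<forall>k\<in>{N..n}. X k \<omega> < g \<omega> - ennreal \<delta>}" for n
  have "(\<lambda>n. measure P (S n)) \<longlonglongrightarrow> 0"
    unfolding S_def space_P[symmetric] using assms(6,7)
    by (intro measure_stays_below_limsup_tendsto_0[OF assms(1)]) (auto simp: space_P)
  from LIMSEQ_D[OF this half_gt_zero[OF assms(8)]] obtain n0 where "\<forall>n\<ge>n0. measure P (S n) < \<eta>/2"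
    by auto
  then have S: "measure P (S (max N n0)) < \<eta>/2" by simp
  define N' where "N' = max N n0"
  define \<rho> where "\<rho> \<omega> = enat (hitting_time_upto N' (\<lambda>k. N \<le> k \<and> h \<omega> - ennreal \<delta> \<le> X k \<omega>))" for \<omega>
  have "stopping_time G \<rho>"
    unfolding \<rho>_def by (rule stopping_time_first_approach[OF assms(3,4) h(1)])
  moreover have "S N' \<in> sets M"
  proof -
    have "{\<omega>\<in>space P. \<forall>k\<in>{N..N'}. X k \<omega> < g \<omega> - ennreal \<delta>} \<in> sets P" by measurable
    then show ?thesis by (simp add: S_def space_P assms(2))
  qed
  moreover have "g \<omega> \<le> stopped X \<rho> \<omega> + ennreal \<delta>" if "\<omega> \<in> space M - (D \<union> S N')" for \<omega>
  proof -
    have "\<rho> \<omega> = enat (hitting_time_upto N' (\<lambda>k. N \<le> k \<and> g \<omega> - ennreal \<delta> \<le> X k \<omega>))"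
      using that h(4) by (simp add: \<rho>_def)
    moreover have "\<not> (\<forall>k\<in>{N..N'}. X k \<omega> < g \<omega> - ennreal \<delta>)"
      using that by (simp add: S_def)
    ultimately have "g \<omega> - ennreal \<delta> \<le> stopped X \<rho> \<omega>"
      using hitting_time_upto_reaches[of N N' "g \<omega> - ennreal \<delta>" "\<lambda>k. X k \<omega>"]
      by (simp add: stopped_def N'_def) blast
    then have "(g \<omega> - ennreal \<delta>) + ennreal \<delta> \<le> stopped X \<rho> \<omega> + ennreal \<delta>"
      by (rule add_right_mono)
    then show ?thesis by (rule order_trans[OF le_diff_add_ennreal])
  qed
  moreover have "measure P (D \<union> S N') < \<eta>"
  proof -
    have "measure P (D \<union> S N') \<le> measure P D + measure P (S N')"
      using h(2) \<open>S N' \<in> sets M\<close> assms(2) by (intro measure_Un_le) auto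
    then show ?thesis using h(3) S unfolding N'_def by linarith
  qed
  moreover have "\<forall>\<omega>. \<rho> \<omega> \<le> enat N'" by (simp add: \<rho>_def hitting_time_upto_le)
  ultimately show ?thesis using h(2) by (intro that[of \<rho> N' "D \<union> S N'"]) auto
qed

lemma ennreal_le_by_small_errors:
  fixes x y :: ennreal
  assumes "C \<ge> 0" "\<And>\<delta> \<eta>. \<delta> > 0 \<Longrightarrow> \<eta> > 0 \<Longrightarrow> x \<le> y + (ennreal \<delta> + ennreal C * ennreal \<eta>)"
  shows "x \<le> y"
proof (rule ennreal_le_epsilon)
  fix e :: real assume "0 < e"
  define \<eta> where "\<eta> = e / (2 * (C + 1))"
  have "\<eta> > 0" using \<open>0 < e\<close> assms(1) by (simp add: \<eta>_def)
  have "C * \<eta> \<le> e / 2" using \<open>0 < e\<close> assms(1) by (simp add: \<eta>_def field_simps)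
  then have "ennreal (e / 2) + ennreal C * ennreal \<eta> \<le> ennreal e"
    using \<open>0 < e\<close> \<open>\<eta> > 0\<close> assms(1) by (simp add: ennreal_mult[symmetric] ennreal_plus[symmetric] del: ennreal_plus)
  then show "x \<le> y + ennreal e"
    using assms(2)[of "e / 2" \<eta>] \<open>0 < e\<close> \<open>\<eta> > 0\<close> by (meson add_left_mono half_gt_zero order_trans)
qed

lemma simple_function_le_real_bound:
  fixes g :: "'a \<Rightarrow> ennreal"
  assumes "simple_function M g" "\<forall>\<omega>\<in>space M. g \<omega> < \<top>"
  obtains C where "C \<ge> 0" "\<forall>\<omega>\<in>space M. g \<omega> \<le> ennreal C"
proof
  define C where "C = (\<Sum>c\<in>g ` space M. enn2real c)"
  show "C \<ge> 0" unfolding C_def by (simp add: sum_nonneg)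
  show "\<forall>\<omega>\<in>space M. g \<omega> \<le> ennreal C"
  proof
    fix \<omega> assume "\<omega> \<in> space M"
    then have "enn2real (g \<omega>) \<le> C"
      unfolding C_def using simple_functionD(1)[OF assms(1)] by (intro member_le_sum) auto
    moreover have "g \<omega> = ennreal (enn2real (g \<omega>))"
      using \<open>\<omega> \<in> space M\<close> assms(2) by (simp add: ennreal_enn2real_if less_top[symmetric])
    ultimately show "g \<omega> \<le> ennreal C" by (metis ennreal_leI)
  qed
qed

lemma nn_integral_simple_below_limsup_le_1:
  fixes X :: "nat \<Rightarrow> 'a \<Rightarrow> ennreal"
  assumes "prob_space P" "sets P = sets M" "filtration M G" "\<forall>n. X n \<in> borel_measurable (G n)"
    and "bounded_time_eprocess P G X" "simple_function (filtration_limit M G) g"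
    and "\<forall>\<omega>\<in>space M. g \<omega> \<le> limsup (\<lambda>n. X n \<omega>) \<and> g \<omega> < \<top>"
  shows "(\<integral>\<^sup>+\<omega>. g \<omega> \<partial>P) \<le> 1"
proof -
  interpret prob_space P by (rule assms(1))
  have space_P: "space P = space M" using sets_eq_imp_space_eq[OF assms(2)] .
  have [measurable]: "X n \<in> borel_measurable P" for n
    using assms(2,4) measurable_from_sub_sigma[OF filtration_sub_sigma[OF assms(3)]] by blast
  have [measurable]: "g \<in> borel_measurable P"
    using borel_measurable_simple_function[OF assms(6)]
    by (rule measurable_from_sub_sigma[OF sub_sigma_filtration_limit[OF assms(3)] assms(2)])
  obtain C where "C \<ge> 0" and g_le_C: "\<forall>\<omega>\<in>space M. g \<omega> \<le> ennreal C"
    using simple_function_le_real_bound[OF assms(6)] assms(7)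
    by (auto simp: space_filtration_limit[OF assms(3)])
  show ?thesis
  proof (rule ennreal_le_by_small_errors[OF \<open>C \<ge> 0\<close>])
    fix \<delta> \<eta> :: real assume "\<delta> > 0" "\<eta> > 0"
    obtain \<rho> K D where \<rho>: "stopping_time G \<rho>" "\<forall>\<omega>. \<rho> \<omega> \<le> enat K"
      and D: "D \<in> sets M" "measure P D < \<eta>"
      and near: "\<forall>\<omega>\<in>space M - D. g \<omega> \<le> stopped X \<rho> \<omega> + ennreal \<delta>"
      by (rule bounded_stopping_time_near_limsup[OF finite_measure_axioms assms(2-4,6,7) \<open>\<delta> > 0\<close> \<open>\<eta> > 0\<close>])
    have [measurable]: "stopped X \<rho> \<in> borel_measurable P"
      using measurable_stopping_time[OF assms(3) \<rho>(1) assms(2)] by (rule borel_measurable_stopped) simp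
    have [measurable]: "D \<in> sets P" using D(1) assms(2) by simp
    have "(\<integral>\<^sup>+\<omega>. g \<omega> \<partial>P) \<le> (\<integral>\<^sup>+\<omega>. stopped X \<rho> \<omega> + (ennreal \<delta> + ennreal C * indicator D \<omega>) \<partial>P)"
    proof (rule nn_integral_mono)
      fix \<omega> assume "\<omega> \<in> space P"
      then show "g \<omega> \<le> stopped X \<rho> \<omega> + (ennreal \<delta> + ennreal C * indicator D \<omega>)"
        using near g_le_C space_P
        by (cases "\<omega> \<in> D") (auto intro: order_trans add_increasing add_mono)
    qed
    also have "\<dots> = (\<integral>\<^sup>+\<omega>. stopped X \<rho> \<omega> \<partial>P) + (ennreal \<delta> + ennreal C * emeasure P D)"
      by (simp add: nn_integral_add nn_integral_cmult_indicator emeasure_space_1)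
    also have "\<dots> \<le> 1 + (ennreal \<delta> + ennreal C * ennreal \<eta>)"
    proof (intro add_mono mult_left_mono order_refl)
      show "(\<integral>\<^sup>+\<omega>. stopped X \<rho> \<omega> \<partial>P) \<le> 1"
        using assms(5) \<rho> unfolding bounded_time_eprocess_def by blast
      show "emeasure P D \<le> ennreal \<eta>"
        using D(2) by (simp add: emeasure_eq_measure ennreal_leI)
    qed simp
    finally show "(\<integral>\<^sup>+\<omega>. g \<omega> \<partial>P) \<le> 1 + (ennreal \<delta> + ennreal C * ennreal \<eta>)" .
  qed
qed

lemma nn_integral_limsup_le_1:
  fixes X :: "nat \<Rightarrow> 'a \<Rightarrow> ennreal"
  assumes "prob_space P" "sets P = sets M" "filtration M G" "\<forall>n. X n \<in> borel_measurable (G n)"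
    and "bounded_time_eprocess P G X"
  shows "(\<integral>\<^sup>+\<omega>. limsup (\<lambda>n. X n \<omega>) \<partial>P) \<le> 1"
proof -
  have "X n \<in> borel_measurable (filtration_limit M G)" for n
  proof (rule measurable_from_subalg[OF _ assms(4)[rule_format]])
    show "subalgebra (filtration_limit M G) (G n)"
      using sets_subset_filtration_limit[OF assms(3)]
      by (simp add: subalgebra_def filtration_space[OF assms(3)] space_filtration_limit[OF assms(3)])
  qed
  then have limsup_measurable: "(\<lambda>\<omega>. limsup (\<lambda>n. X n \<omega>)) \<in> borel_measurable (filtration_limit M G)"
    by (rule borel_measurable_limsup)
  obtain f where f: "\<And>i. simple_function (filtration_limit M G) (f i)" "incseq f"
    "\<And>i \<omega>. f i \<omega> < \<top>" "\<And>\<omega>. (SUP i. f i \<omega>) = limsup (\<lambda>n. X n \<omega>)"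
    by (rule borel_measurable_implies_simple_function_sequence'[OF limsup_measurable]) auto
  have "f i \<omega> \<le> limsup (\<lambda>n. X n \<omega>)" for i \<omega>
    using f(4)[of \<omega>] by (metis SUP_upper UNIV_I)
  then have f_le_1: "(\<integral>\<^sup>+\<omega>. f i \<omega> \<partial>P) \<le> 1" for i
    using f(3) by (intro nn_integral_simple_below_limsup_le_1[OF assms f(1)]) auto
  have "f i \<in> borel_measurable P" for i
    using borel_measurable_simple_function[OF f(1)]
    by (rule measurable_from_sub_sigma[OF sub_sigma_filtration_limit[OF assms(3)] assms(2)])
  then have "(\<integral>\<^sup>+\<omega>. (SUP i. f i \<omega>) \<partial>P) = (SUP i. \<integral>\<^sup>+\<omega>. f i \<omega> \<partial>P)"
    using f(2) by (intro nn_integral_monotone_convergence_SUP) auto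
  then show ?thesis using f(4) f_le_1 by (simp add: SUP_least)
qed

lemma stopped_eq_limsup_stopped_min:
  "stopped X \<tau> \<omega> = limsup (\<lambda>n. stopped X (\<lambda>\<omega>. min (\<tau> \<omega>) (enat n)) \<omega>)"
proof (cases "\<tau> \<omega>")
  case (enat k)
  then have "eventually (\<lambda>n. stopped X (\<lambda>\<omega>. min (\<tau> \<omega>) (enat n)) \<omega> = X k \<omega>) sequentially"
    unfolding eventually_sequentially by (intro exI[of _ k]) (simp add: stopped_def)
  then have "(\<lambda>n. stopped X (\<lambda>\<omega>. min (\<tau> \<omega>) (enat n)) \<omega>) \<longlonglongrightarrow> X k \<omega>"
    by (rule tendsto_eventually)
  then show ?thesis using enat by (simp add: lim_imp_Limsup stopped_def)
qed (simp add: stopped_def)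

text \<open>X_\<tau> is the limsup of the stopped process X_{min \<tau> n}, whose values at bounded stopping
  times are values of X at bounded stopping times.\<close>
lemma nn_integral_stopped_le_1_if_bounded_time_eprocess:
  fixes X :: "nat \<Rightarrow> 'a \<Rightarrow> ennreal"
  assumes "prob_space P" "sets P = sets M" "filtration M G" "\<forall>n. X n \<in> borel_measurable (G n)"
    and "bounded_time_eprocess P G X" "stopping_time G \<tau>"
  shows "(\<integral>\<^sup>+\<omega>. stopped X \<tau> \<omega> \<partial>P) \<le> 1"
proof -
  define Y where "Y n = stopped X (\<lambda>\<omega>. min (\<tau> \<omega>) (enat n))" for n
  have "\<forall>n. Y n \<in> borel_measurable (G n)"
    unfolding Y_def
    using borel_measurable_stopped_bounded[OF assms(3) stopping_time_min[OF assms(6) stopping_time_const]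
        _ assms(4)]
    by simp
  moreover have "bounded_time_eprocess P G Y"
    unfolding bounded_time_eprocess_def
  proof (intro allI impI)
    fix \<sigma> K assume \<sigma>: "stopping_time G \<sigma>" "\<forall>\<omega>\<in>space P. \<sigma> \<omega> \<le> enat K"
    have "stopped Y \<sigma> \<omega> = stopped X (\<lambda>\<omega>. min (\<tau> \<omega>) (\<sigma> \<omega>)) \<omega>" if "\<omega> \<in> space P" for \<omega>
      using \<sigma>(2) that by (cases "\<sigma> \<omega>") (auto simp: stopped_def Y_def)
    then have "(\<integral>\<^sup>+\<omega>. stopped Y \<sigma> \<omega> \<partial>P) = (\<integral>\<^sup>+\<omega>. stopped X (\<lambda>\<omega>. min (\<tau> \<omega>) (\<sigma> \<omega>)) \<omega> \<partial>P)"
      by (rule nn_integral_cong)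
    also have "\<dots> \<le> 1"
      using assms(5) stopping_time_min[OF assms(6) \<sigma>(1)] \<sigma>(2) min.coboundedI2
      unfolding bounded_time_eprocess_def by blast
    finally show "(\<integral>\<^sup>+\<omega>. stopped Y \<sigma> \<omega> \<partial>P) \<le> 1" .
  qed
  ultimately have "(\<integral>\<^sup>+\<omega>. limsup (\<lambda>n. Y n \<omega>) \<partial>P) \<le> 1"
    by (rule nn_integral_limsup_le_1[OF assms(1-3)])
  then show ?thesis by (simp add: Y_def flip: stopped_eq_limsup_stopped_min)
qed

section \<open>Stopped processes that are close in L1\<close>

lemma le_plus_absdiff: "(x::ennreal) \<le> y + absdiff x y"
proof -
  have "x \<le> (x - y) + y" by (rule le_diff_add_ennreal)
  also have "\<dots> \<le> y + absdiff x y" by (simp add: absdiff_def add.commute add_left_mono)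
  finally show ?thesis .
qed

lemma absdiff_commute: "absdiff x y = absdiff y x"
  by (simp add: absdiff_def add.commute)

lemma stopped_le_plus_absdiff_sum:
  assumes "\<tau> \<omega> \<le> \<rho>"
  shows "stopped X \<tau> \<omega> \<le> stopped Y \<tau> \<omega> + (\<Sum>n. if enat n \<le> \<rho> then absdiff (X n \<omega>) (Y n \<omega>) else 0)"
    (is "_ \<le> _ + ?S")
proof -
  have absdiff_le: "absdiff (X n \<omega>) (Y n \<omega>) \<le> ?S" if "enat n \<le> \<rho>" for n
    using sum_le_suminf[OF summableI, of "{n}" "\<lambda>n. if enat n \<le> \<rho> then absdiff (X n \<omega>) (Y n \<omega>) else 0"]
      that by simp
  have X_le: "X n \<omega> \<le> Y n \<omega> + ?S" if "enat n \<le> \<rho>" for n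
    using le_plus_absdiff[of "X n \<omega>" "Y n \<omega>"] add_left_mono[OF absdiff_le[OF that]] by (rule order_trans)
  show ?thesis
  proof (cases "\<tau> \<omega>")
    case (enat k)
    then show ?thesis using X_le[of k] assms by (simp add: stopped_def)
  next
    case infinity
    then have "\<forall>n. X n \<omega> \<le> ?S + Y n \<omega>" using X_le assms by (simp add: add.commute)
    then have "limsup (\<lambda>n. X n \<omega>) \<le> limsup (\<lambda>n. ?S + Y n \<omega>)"
      by (intro Limsup_mono always_eventually)
    also have "\<dots> = ?S + limsup (\<lambda>n. Y n \<omega>)" by (rule Limsup_const_add) simp
    finally show ?thesis using infinity by (simp add: stopped_def add.commute)
  qed
qed

lemma nn_integral_stopped_le_plus_dist:
  assumes "AE \<omega> in P. \<tau> \<omega> \<le> \<rho>" "\<tau> \<in> measurable P (count_space UNIV)"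
    and "\<forall>n. X n \<in> borel_measurable P" "\<forall>n. Y n \<in> borel_measurable P"
    and "\<forall>n. enat n \<le> \<rho> \<longrightarrow> (\<integral>\<^sup>+\<omega>. absdiff (X n \<omega>) (Y n \<omega>) \<partial>P) \<le> d n"
  shows "(\<integral>\<^sup>+\<omega>. stopped X \<tau> \<omega> \<partial>P) \<le> (\<integral>\<^sup>+\<omega>. stopped Y \<tau> \<omega> \<partial>P) + (\<Sum>n. if enat n \<le> \<rho> then d n else 0)"
proof -
  have [measurable]: "X n \<in> borel_measurable P" "Y n \<in> borel_measurable P" for n
    using assms(3,4) by auto
  have [measurable]: "(\<lambda>\<omega>. absdiff (X n \<omega>) (Y n \<omega>)) \<in> borel_measurable P" for n
    unfolding absdiff_def by measurable
  define S where "S \<omega> = (\<Sum>n. if enat n \<le> \<rho> then absdiff (X n \<omega>) (Y n \<omega>) else 0)" for \<omega>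
  have [measurable]: "S \<in> borel_measurable P" unfolding S_def by measurable
  have "(\<integral>\<^sup>+\<omega>. S \<omega> \<partial>P) = (\<Sum>n. \<integral>\<^sup>+\<omega>. (if enat n \<le> \<rho> then absdiff (X n \<omega>) (Y n \<omega>) else 0) \<partial>P)"
    unfolding S_def by (intro nn_integral_suminf) simp
  also have "\<dots> \<le> (\<Sum>n. if enat n \<le> \<rho> then d n else 0)"
    using assms(5) by (intro suminf_le) auto
  finally have S_le: "(\<integral>\<^sup>+\<omega>. S \<omega> \<partial>P) \<le> (\<Sum>n. if enat n \<le> \<rho> then d n else 0)" .
  have "(\<integral>\<^sup>+\<omega>. stopped X \<tau> \<omega> \<partial>P) \<le> (\<integral>\<^sup>+\<omega>. stopped Y \<tau> \<omega> + S \<omega> \<partial>P)"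
    using assms(1) by (intro nn_integral_mono_AE) (auto simp: S_def elim!: eventually_mono
        intro: stopped_le_plus_absdiff_sum)
  also have "\<dots> = (\<integral>\<^sup>+\<omega>. stopped Y \<tau> \<omega> \<partial>P) + (\<integral>\<^sup>+\<omega>. S \<omega> \<partial>P)"
    using borel_measurable_stopped[OF assms(2,4)] by (intro nn_integral_add) simp_all
  finally show ?thesis using S_le by (meson add_left_mono order_trans)
qed

lemma limsup_add_tendsto_0_le:
  fixes a s :: "nat \<Rightarrow> ennreal"
  assumes "s \<longlonglongrightarrow> 0"
  shows "limsup (\<lambda>m. a m + s m) \<le> limsup a"
  unfolding Limsup_le_iff
proof (intro allI impI)
  fix y assume "limsup a < y"
  then obtain z where "limsup a < z" "z < y" using dense by blast
  have "eventually (\<lambda>m. a m < z) sequentially" using Limsup_lessD[OF \<open>limsup a < z\<close>] .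
  moreover have "eventually (\<lambda>m. s m < y - z) sequentially"
    using order_tendstoD(2)[OF assms diff_gr0_ennreal[OF \<open>z < y\<close>]] .
  ultimately have "eventually (\<lambda>m. a m + s m < z + (y - z)) sequentially"
    by eventually_elim (rule add_strict_mono)
  then show "eventually (\<lambda>m. a m + s m < y) sequentially"
    using \<open>z < y\<close> by (simp add: add_diff_inverse_ennreal)
qed

lemma diagonal_cutoff:
  fixes d :: "nat \<Rightarrow> nat \<Rightarrow> ennreal"
  assumes "\<And>n. (\<lambda>m. d m n) \<longlonglongrightarrow> 0"
  obtains r where "tends_to_infinity r" "(\<lambda>m. \<Sum>n. if enat n \<le> r m then d m n else 0) \<longlonglongrightarrow> 0"
proof
  define S where "S m K = (\<Sum>n\<le>K. d m n)" for m K
  define good where "good m = {K. K \<le> m \<and> S m K < ennreal (inverse (Suc K))}" for m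
  define R where "R m = Max (good m)" for m \<comment> \<open>junk while good m = {}, but every K eventually lies in good m\<close>
  have "finite (good m)" for m by (simp add: good_def)
  have "(\<lambda>m. S m K) \<longlonglongrightarrow> 0" for K
    unfolding S_def using assms tendsto_sum[of "{..K}" "\<lambda>n m. d m n" "\<lambda>_. 0"] by simp
  then have "eventually (\<lambda>m. S m K < ennreal (inverse (Suc K))) sequentially" for K
    by (rule order_tendstoD(2)) simp
  then have eventually_good: "eventually (\<lambda>m. K \<in> good m) sequentially" for K
    using eventually_ge_at_top[of K] unfolding good_def by eventually_elim simp
  have R: "K \<le> R m \<and> R m \<in> good m" if "K \<in> good m" for K m
    using that Max_ge[OF \<open>finite (good m)\<close>] Max_in[OF \<open>finite (good m)\<close>] by (auto simp: R_def)
  show "tends_to_infinity (\<lambda>m. enat (R m))"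
    unfolding tends_to_infinity_def
  proof
    fix K
    show "eventually (\<lambda>m. enat K \<le> enat (R m)) sequentially"
      using eventually_good[of K] by (rule eventually_mono) (simp add: R)
  qed
  have sum_eq: "(\<Sum>n. if enat n \<le> enat (R m) then d m n else 0) = S m (R m)" for m
    unfolding S_def by (subst suminf_finite[of "{..R m}"]) auto
  show "(\<lambda>m. \<Sum>n. if enat n \<le> enat (R m) then d m n else 0) \<longlonglongrightarrow> 0"
    unfolding sum_eq
  proof (rule order_tendstoI)
    fix a :: ennreal assume "0 < a"
    have "(\<lambda>K. ennreal (inverse (Suc K))) \<longlonglongrightarrow> ennreal 0"
      using LIMSEQ_inverse_real_of_nat by (rule tendsto_ennrealI)
    from order_tendstoD(2)[OF this] \<open>0 < a\<close> obtain K :: nat where "ennreal (inverse (Suc K)) < a"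
      by (auto simp: eventually_sequentially)
    show "eventually (\<lambda>m. S m (R m) < a) sequentially"
      using eventually_good[of K]
    proof eventually_elim
      case (elim m)
      then have "K \<le> R m" "S m (R m) < ennreal (inverse (Suc (R m)))" using R by (auto simp: good_def)
      moreover have "ennreal (inverse (Suc (R m))) \<le> ennreal (inverse (Suc K))"
        using \<open>K \<le> R m\<close> by (intro ennreal_leI le_imp_inverse_le) simp_all
      ultimately show ?case using \<open>ennreal (inverse (Suc K)) < a\<close> by order
    qed
  qed simp
qed

lemma nn_integral_absdiff_le_L1_dist_sup:
  "P \<in> Ps \<Longrightarrow> (\<integral>\<^sup>+\<omega>. absdiff (X \<omega>) (Y \<omega>) \<partial>P) \<le> L1_dist_sup Ps X Y"
  unfolding L1_dist_sup_def by (rule SUP_upper)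

lemma AE_le_if_bounded_stopping_time:
  assumes "prob_space P" "P \<in> Ps" "\<tau> \<in> bounded_stopping_times \<rho> G Ps"
  shows "AE \<omega> in P. \<tau> \<omega> \<le> \<rho>"
proof -
  have emeasure_1: "emeasure P {\<omega>\<in>space P. \<tau> \<omega> \<le> \<rho>} = 1"
    using assms(2,3) by (simp add: bounded_stopping_times_def)
  then have "{\<omega>\<in>space P. \<tau> \<omega> \<le> \<rho>} \<in> sets P"
    by (metis emeasure_notin_sets zero_neq_one)
  moreover have "measure P {\<omega>\<in>space P. \<tau> \<omega> \<le> \<rho>} = 1"
    using emeasure_1 by (simp add: measure_def)
  ultimately have "AE \<omega> in P. \<omega> \<in> {\<omega>\<in>space P. \<tau> \<omega> \<le> \<rho>}"
    using prob_space.AE_in_set_eq_1[OF assms(1)] by blast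
  then show ?thesis by (rule eventually_mono) simp
qed

lemma
  fixes H :: "'a \<Rightarrow> ennreal"
  assumes "prob_space P" "H \<in> borel_measurable P" "(\<integral>\<^sup>+\<omega>. H \<omega> \<partial>P) < \<top>"
  shows finite_measure_density_one_plus: "finite_measure (density P (\<lambda>\<omega>. 1 + H \<omega>))"
    and nn_integral_indicator_le_density_one_plus:
      "D \<in> sets P \<Longrightarrow> (\<integral>\<^sup>+\<omega>. H \<omega> * indicator D \<omega> \<partial>P) \<le> emeasure (density P (\<lambda>\<omega>. 1 + H \<omega>)) D"
proof -
  have "emeasure (density P (\<lambda>\<omega>. 1 + H \<omega>)) (space P) = (\<integral>\<^sup>+\<omega>. (1 + H \<omega>) * indicator (space P) \<omega> \<partial>P)"
    using assms(2) by (simp add: emeasure_density)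
  also have "\<dots> = (\<integral>\<^sup>+\<omega>. 1 + H \<omega> \<partial>P)"
    by (rule nn_integral_cong) simp
  also have "\<dots> = 1 + (\<integral>\<^sup>+\<omega>. H \<omega> \<partial>P)"
    using assms(2) by (simp add: nn_integral_add prob_space.emeasure_space_1[OF assms(1)])
  finally show "finite_measure (density P (\<lambda>\<omega>. 1 + H \<omega>))"
    using assms(3) by (intro finite_measureI) (simp add: top_unique)
  show "(\<integral>\<^sup>+\<omega>. H \<omega> * indicator D \<omega> \<partial>P) \<le> emeasure (density P (\<lambda>\<omega>. 1 + H \<omega>)) D"
    if "D \<in> sets P"
    using that assms(2) by (simp add: emeasure_density nn_integral_mono mult_right_mono)
qed

section \<open>Adapted arrays with a uniform L1 limit\<close>

locale adapted_array =
  fixes M :: "'a measure" and Ps :: "'a measure set" and F :: "nat \<Rightarrow> nat \<Rightarrow> 'a measure"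
    and E :: "nat \<Rightarrow> nat \<Rightarrow> 'a \<Rightarrow> ennreal" and G :: "nat \<Rightarrow> 'a \<Rightarrow> ennreal"
  assumes probs: "\<forall>P\<in>Ps. prob_space P \<and> sets P = sets M"
    and arr: "filtration_array M F"
    and adaptedE: "\<forall>m n. E m n \<in> borel_measurable (F m n)"
    and adaptedG: "\<forall>n. G n \<in> borel_measurable (F_inf M F n)"
begin

lemma prob_space_P: "P \<in> Ps \<Longrightarrow> prob_space P"
  using probs by blast

lemma sets_P: "P \<in> Ps \<Longrightarrow> sets P = sets M"
  using probs by blast

lemma E_measurable: "P \<in> Ps \<Longrightarrow> E m n \<in> borel_measurable P"
  using adaptedE measurable_from_sub_sigma[OF filtration_sub_sigma[OF filtration_array_row[OF arr]] sets_P]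
  by blast

lemma G_measurable: "P \<in> Ps \<Longrightarrow> G n \<in> borel_measurable P"
  using adaptedG measurable_from_sub_sigma[OF filtration_sub_sigma[OF filtration_F_inf[OF arr]] sets_P]
  by blast

lemma stopping_time_F_inf: "stopping_time (F m) \<tau> \<Longrightarrow> stopping_time (F_inf M F) \<tau>"
  using sets_subset_F_inf[OF arr, of m]
  by (auto simp: stopping_time_def filtration_space[OF filtration_array_row[OF arr]]
      filtration_space[OF filtration_F_inf[OF arr]])

lemma nn_integral_stopped_E_le:
  assumes "P \<in> Ps" "\<tau> \<in> measurable P (count_space UNIV)" "AE \<omega> in P. \<tau> \<omega> \<le> \<rho>"
  shows "(\<integral>\<^sup>+\<omega>. stopped (E m) \<tau> \<omega> \<partial>P)
      \<le> (\<integral>\<^sup>+\<omega>. stopped G \<tau> \<omega> \<partial>P) + (\<Sum>n. if enat n \<le> \<rho> then L1_dist_sup Ps (E m n) (G n) else 0)"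
  using E_measurable[OF assms(1)] G_measurable[OF assms(1)] nn_integral_absdiff_le_L1_dist_sup[OF assms(1)]
  by (intro nn_integral_stopped_le_plus_dist[OF assms(3,2)]) simp_all

lemma nn_integral_stopped_G_le:
  assumes "P \<in> Ps" "\<tau> \<in> measurable P (count_space UNIV)" "AE \<omega> in P. \<tau> \<omega> \<le> \<rho>"
  shows "(\<integral>\<^sup>+\<omega>. stopped G \<tau> \<omega> \<partial>P)
      \<le> (\<integral>\<^sup>+\<omega>. stopped (E m) \<tau> \<omega> \<partial>P) + (\<Sum>n. if enat n \<le> \<rho> then L1_dist_sup Ps (E m n) (G n) else 0)"
proof -
  have "(\<integral>\<^sup>+\<omega>. absdiff (G n \<omega>) (E m n \<omega>) \<partial>P) \<le> L1_dist_sup Ps (E m n) (G n)" for n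
    by (subst absdiff_commute) (rule nn_integral_absdiff_le_L1_dist_sup[OF assms(1)])
  then show ?thesis using E_measurable[OF assms(1)] G_measurable[OF assms(1)]
    by (intro nn_integral_stopped_le_plus_dist[OF assms(3,2)]) simp_all
qed

lemma asymptotic_eprocess_if_sum_condition:
  assumes "eprocess Ps (F_inf M F) G" "sum_condition Ps E G r"
  shows "asymptotic_eprocess Ps F r E"
  unfolding asymptotic_eprocess_def
proof (intro allI impI)
  fix \<tau> assume \<tau>: "\<forall>m. \<tau> m \<in> bounded_stopping_times (r m) (F m) Ps"
  define s where "s m = (\<Sum>n. if enat n \<le> r m then L1_dist_sup Ps (E m n) (G n) else 0)" for m
  have "(\<integral>\<^sup>+\<omega>. stopped (E m) (\<tau> m) \<omega> \<partial>P) \<le> 1 + s m" if "P \<in> Ps" for m P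
  proof -
    have st: "stopping_time (F m) (\<tau> m)" using \<tau> by (simp add: bounded_stopping_times_def)
    have "(\<integral>\<^sup>+\<omega>. stopped (E m) (\<tau> m) \<omega> \<partial>P) \<le> (\<integral>\<^sup>+\<omega>. stopped G (\<tau> m) \<omega> \<partial>P) + s m"
      unfolding s_def
    proof (rule nn_integral_stopped_E_le[OF that])
      show "\<tau> m \<in> measurable P (count_space UNIV)"
        by (rule measurable_stopping_time[OF filtration_array_row[OF arr] st sets_P[OF that]])
      show "AE \<omega> in P. \<tau> m \<omega> \<le> r m"
        using AE_le_if_bounded_stopping_time[OF prob_space_P[OF that] that] \<tau> by blast
    qed
    also have "\<dots> \<le> 1 + s m"
      using assms(1) stopping_time_F_inf[OF st] that unfolding eprocess_def by (blast intro: add_right_mono)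
    finally show ?thesis .
  qed
  then have "limsup (\<lambda>m. SUP P\<in>Ps. \<integral>\<^sup>+\<omega>. stopped (E m) (\<tau> m) \<omega> \<partial>P) \<le> limsup (\<lambda>m. 1 + s m)"
    by (intro Limsup_mono always_eventually allI SUP_least) auto
  also have "\<dots> \<le> limsup (\<lambda>m. 1::ennreal)"
    using assms(2) unfolding sum_condition_def s_def by (rule limsup_add_tendsto_0_le)
  finally show "limsup (\<lambda>m. SUP P\<in>Ps. \<integral>\<^sup>+\<omega>. stopped (E m) (\<tau> m) \<omega> \<partial>P) \<le> 1"
    by (simp add: Limsup_const)
qed

lemma limsup_nn_integral_stopped_E_le_1:
  assumes "asymptotic_eprocess Ps F r E" "tends_to_infinity r" "P \<in> Ps"
    and "\<forall>m\<ge>m0. stopping_time (F m) \<tau>" "\<forall>\<omega>. \<tau> \<omega> \<le> enat K"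
  shows "limsup (\<lambda>m. \<integral>\<^sup>+\<omega>. stopped (E m) \<tau> \<omega> \<partial>P) \<le> 1"
proof -
  define \<tau>s where "\<tau>s m = (if m0 \<le> m \<and> enat K \<le> r m then \<tau> else (\<lambda>_. 0))" for m
  have "\<tau>s m \<in> bounded_stopping_times (r m) (F m) Ps" for m
  proof -
    have "stopping_time (F m) (\<tau>s m)"
      using assms(4) stopping_time_const[of "F m" 0] by (simp add: \<tau>s_def zero_enat_def)
    moreover have "\<tau>s m \<omega> \<le> r m" for \<omega>
      using order_trans[OF assms(5)[rule_format, of \<omega>]] by (simp add: \<tau>s_def)
    ultimately show ?thesis
      by (simp add: bounded_stopping_times_def prob_space.emeasure_space_1[OF prob_space_P])
  qed
  then have "limsup (\<lambda>m. SUP P\<in>Ps. \<integral>\<^sup>+\<omega>. stopped (E m) (\<tau>s m) \<omega> \<partial>P) \<le> 1"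
    using assms(1) unfolding asymptotic_eprocess_def by blast
  moreover have "eventually (\<lambda>m. m0 \<le> m \<and> enat K \<le> r m) sequentially"
    using eventually_ge_at_top assms(2)[unfolded tends_to_infinity_def, rule_format, of K]
    by (rule eventually_conj)
  then have "eventually (\<lambda>m. (\<integral>\<^sup>+\<omega>. stopped (E m) \<tau> \<omega> \<partial>P)
      \<le> (SUP P\<in>Ps. \<integral>\<^sup>+\<omega>. stopped (E m) (\<tau>s m) \<omega> \<partial>P)) sequentially"
    by (rule eventually_mono) (auto simp: \<tau>s_def intro!: SUP_upper assms(3))
  then have "limsup (\<lambda>m. \<integral>\<^sup>+\<omega>. stopped (E m) \<tau> \<omega> \<partial>P)
      \<le> limsup (\<lambda>m. SUP P\<in>Ps. \<integral>\<^sup>+\<omega>. stopped (E m) (\<tau>s m) \<omega> \<partial>P)"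
    by (rule Limsup_mono)
  ultimately show ?thesis by (rule order_trans[rotated])
qed

end

locale uniform_L1_limit = adapted_array +
  assumes conv: "L1_unif_conv Ps E G"
begin

lemma sum_condition_const: "sum_condition Ps E G (\<lambda>_. enat K)"
proof -
  have "(\<Sum>n. if enat n \<le> enat K then L1_dist_sup Ps (E m n) (G n) else 0) = (\<Sum>n\<le>K. L1_dist_sup Ps (E m n) (G n))"
    for m by (subst suminf_finite[of "{..K}"]) auto
  moreover have "(\<lambda>m. \<Sum>n\<le>K. L1_dist_sup Ps (E m n) (G n)) \<longlonglongrightarrow> (\<Sum>n\<le>K. 0)"
    using conv by (intro tendsto_sum) (simp add: L1_unif_conv_def)
  ultimately show ?thesis by (simp add: sum_condition_def)
qed

lemma exists_sum_condition: "\<exists>r. tends_to_infinity r \<and> sum_condition Ps E G r"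
proof -
  obtain r where "tends_to_infinity r" "sum_condition Ps E G r"
    unfolding sum_condition_def
    by (rule diagonal_cutoff[of "\<lambda>m n. L1_dist_sup Ps (E m n) (G n)"]) (use conv in \<open>auto simp: L1_unif_conv_def\<close>)
  then show ?thesis by blast
qed

lemma nn_integral_stopped_G_le_1_if_eventually_stopping:
  assumes "asymptotic_eprocess Ps F r E" "tends_to_infinity r" "P \<in> Ps"
    and "\<forall>m\<ge>m0. stopping_time (F m) \<tau>" "\<forall>\<omega>. \<tau> \<omega> \<le> enat K"
  shows "(\<integral>\<^sup>+\<omega>. stopped G \<tau> \<omega> \<partial>P) \<le> 1"
proof -
  define s where "s m = (\<Sum>n. if enat n \<le> enat K then L1_dist_sup Ps (E m n) (G n) else 0)" for m
  have "\<tau> \<in> measurable P (count_space UNIV)"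
    using assms(4) by (intro measurable_stopping_time[OF filtration_array_row[OF arr] _ sets_P[OF assms(3)]]) auto
  then have "(\<integral>\<^sup>+\<omega>. stopped G \<tau> \<omega> \<partial>P) \<le> (\<integral>\<^sup>+\<omega>. stopped (E m) \<tau> \<omega> \<partial>P) + s m" for m
    unfolding s_def using assms(5) by (intro nn_integral_stopped_G_le[OF assms(3)]) auto
  then have "limsup (\<lambda>m. \<integral>\<^sup>+\<omega>. stopped G \<tau> \<omega> \<partial>P) \<le> limsup (\<lambda>m. (\<integral>\<^sup>+\<omega>. stopped (E m) \<tau> \<omega> \<partial>P) + s m)"
    by (intro Limsup_mono always_eventually) auto
  moreover have "limsup (\<lambda>m. (\<integral>\<^sup>+\<omega>. stopped (E m) \<tau> \<omega> \<partial>P) + s m) \<le> limsup (\<lambda>m. \<integral>\<^sup>+\<omega>. stopped (E m) \<tau> \<omega> \<partial>P)"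
    using sum_condition_const[of K] unfolding sum_condition_def s_def by (rule limsup_add_tendsto_0_le)
  moreover have "limsup (\<lambda>m. \<integral>\<^sup>+\<omega>. stopped (E m) \<tau> \<omega> \<partial>P) \<le> 1"
    by (rule limsup_nn_integral_stopped_E_le_1[OF assms])
  ultimately have "limsup (\<lambda>m. \<integral>\<^sup>+\<omega>. stopped G \<tau> \<omega> \<partial>P) \<le> 1" by (meson order_trans)
  then show ?thesis by (simp add: Limsup_const)
qed

lemma nn_integral_sum_G_finite: "P \<in> Ps \<Longrightarrow> (\<integral>\<^sup>+\<omega>. (\<Sum>j\<le>K. G j \<omega>) \<partial>P) < \<top>"
  using conv G_measurable by (simp add: nn_integral_sum L1_unif_conv_def P_integrable_def)

lemma bounded_time_eprocess_G:
  assumes "asymptotic_eprocess Ps F r E" "tends_to_infinity r" "P \<in> Ps"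
  shows "bounded_time_eprocess P (F_inf M F) G"
  unfolding bounded_time_eprocess_def
proof (intro allI impI)
  fix \<sigma> K assume \<sigma>: "stopping_time (F_inf M F) \<sigma>" "\<forall>\<omega>\<in>space P. \<sigma> \<omega> \<le> enat K"
  have space_P: "space P = space M" using sets_eq_imp_space_eq[OF sets_P[OF assms(3)]] .
  have [measurable]: "G n \<in> borel_measurable P" for n using G_measurable[OF assms(3)] .
  define H where "H \<omega> = (\<Sum>j\<le>K. G j \<omega>)" for \<omega>
  have H_measurable: "H \<in> borel_measurable P" unfolding H_def by measurable
  have H_finite: "(\<integral>\<^sup>+\<omega>. H \<omega> \<partial>P) < \<top>"
    unfolding H_def by (rule nn_integral_sum_G_finite[OF assms(3)])
  \<comment> \<open>Approximating \<sigma> in measure for (1 + H) P controls both P and the integral of H \<ge> G_\<sigma>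
    on the exceptional set.\<close>
  note Q = finite_measure_density_one_plus[OF prob_space_P[OF assms(3)] H_measurable H_finite]
    nn_integral_indicator_le_density_one_plus[OF prob_space_P[OF assms(3)] H_measurable H_finite]
  show "(\<integral>\<^sup>+\<omega>. stopped G \<sigma> \<omega> \<partial>P) \<le> 1"
  proof (rule ennreal_le_epsilon)
    fix \<eta> :: real assume "0 < \<eta>"
    obtain m0 \<tau> D where \<tau>: "\<forall>m\<ge>m0. stopping_time (F m) \<tau>" "\<forall>\<omega>. \<tau> \<omega> \<le> enat K"
      and D: "D \<in> sets M" "measure (density P (\<lambda>\<omega>. 1 + H \<omega>)) D < \<eta>" "\<forall>\<omega>\<in>space M - D. \<tau> \<omega> = \<sigma> \<omega>"
      by (rule approximate_stopping_time_F_inf[OF arr Q(1) _ \<sigma>(1) _ \<open>0 < \<eta>\<close>])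
        (use sets_P[OF assms(3)] \<sigma>(2) space_P in auto)
    have [measurable]: "D \<in> sets P" using D(1) sets_P[OF assms(3)] by simp
    have "\<tau> \<in> measurable P (count_space UNIV)"
      using \<tau>(1) by (intro measurable_stopping_time[OF filtration_array_row[OF arr] _ sets_P[OF assms(3)]]) auto
    then have [measurable]: "stopped G \<tau> \<in> borel_measurable P" by (rule borel_measurable_stopped) simp
    have "(\<integral>\<^sup>+\<omega>. stopped G \<sigma> \<omega> \<partial>P) \<le> (\<integral>\<^sup>+\<omega>. stopped G \<tau> \<omega> + H \<omega> * indicator D \<omega> \<partial>P)"
    proof (rule nn_integral_mono)
      fix \<omega> assume "\<omega> \<in> space P"
      then show "stopped G \<sigma> \<omega> \<le> stopped G \<tau> \<omega> + H \<omega> * indicator D \<omega>"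
        using D(3) stopped_le_sum[of \<sigma> \<omega> K G] \<sigma>(2) space_P
        by (cases "\<omega> \<in> D") (auto simp: H_def stopped_def intro: add_increasing)
    qed
    also have "\<dots> = (\<integral>\<^sup>+\<omega>. stopped G \<tau> \<omega> \<partial>P) + (\<integral>\<^sup>+\<omega>. H \<omega> * indicator D \<omega> \<partial>P)"
      using H_measurable by (intro nn_integral_add) simp_all
    also have "\<dots> \<le> 1 + ennreal \<eta>"
    proof (rule add_mono)
      show "(\<integral>\<^sup>+\<omega>. stopped G \<tau> \<omega> \<partial>P) \<le> 1"
        by (rule nn_integral_stopped_G_le_1_if_eventually_stopping[OF assms \<tau>])
      have "(\<integral>\<^sup>+\<omega>. H \<omega> * indicator D \<omega> \<partial>P) \<le> emeasure (density P (\<lambda>\<omega>. 1 + H \<omega>)) D"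
        by (rule Q(2)) simp
      also have "\<dots> \<le> ennreal \<eta>"
        using D(2) by (simp add: finite_measure.emeasure_eq_measure[OF Q(1)] ennreal_leI)
      finally show "(\<integral>\<^sup>+\<omega>. H \<omega> * indicator D \<omega> \<partial>P) \<le> ennreal \<eta>" .
    qed
    finally show "(\<integral>\<^sup>+\<omega>. stopped G \<sigma> \<omega> \<partial>P) \<le> 1 + ennreal \<eta>" .
  qed
qed

lemma eprocess_if_asymptotic_eprocess:
  assumes "asymptotic_eprocess Ps F r E" "tends_to_infinity r"
  shows "eprocess Ps (F_inf M F) G"
  unfolding eprocess_def
  using adaptedG nn_integral_stopped_le_1_if_bounded_time_eprocess[OF prob_space_P sets_P
      filtration_F_inf[OF arr] adaptedG bounded_time_eprocess_G[OF assms]]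
  by blast

end

theorem mainTheorem5:
  fixes M :: "'a measure"
    and Ps :: "'a measure set"
    and F :: "nat \<Rightarrow> nat \<Rightarrow> 'a measure"
    and E :: "nat \<Rightarrow> nat \<Rightarrow> 'a \<Rightarrow> ennreal"
    and G :: "nat \<Rightarrow> 'a \<Rightarrow> ennreal"
  assumes probs: "\<forall>P\<in>Ps. prob_space P \<and> sets P = sets M"
    and arr: "filtration_array M F"
    and adaptedE: "\<forall>m n. E m n \<in> borel_measurable (F m n)"
    and adaptedG: "\<forall>n. G n \<in> borel_measurable (F_inf M F n)"
    and conv: "L1_unif_conv Ps E G"
  shows "((\<exists>r. tends_to_infinity r \<and> asymptotic_eprocess Ps F r E)
            \<longleftrightarrow> eprocess Ps (F_inf M F) G)
       \<and> (eprocess Ps (F_inf M F) G \<longrightarrow>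
            (\<forall>r. sum_condition Ps E G r \<longrightarrow> asymptotic_eprocess Ps F r E)
          \<and> (\<exists>r. tends_to_infinity r \<and> sum_condition Ps E G r))"
proof -
  interpret uniform_L1_limit M Ps F E G
    using assms by unfold_locales
  show ?thesis
    using eprocess_if_asymptotic_eprocess asymptotic_eprocess_if_sum_condition exists_sum_condition
    by blast
qed

end
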